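(* Let $\boldsymbol{M}$ be a weight sequence with $\gamma(\boldsymbol{M})>0$. Then $\mathcal{M}(C_{\{\boldsymbol{M}\}}(0,\infty))\subset\Lambda_{\{\boldsymbol{M}_{+1}\}}$ if and only if $\boldsymbol{M}$ satisfies $\operatorname{(sm)}$.
   Context: Sequences are of positive reals indexed by $\mathbb{N}_0$; $m_p=M_{p+1}/M_p$. Weight sequence: $M_0=1$, $M_p^2\le M_{p-1}M_{p+1}$ ($p\ge1$), $m_p\to\infty$. $\operatorname{(sm)}$: there are $C_0>0$, $H>1$ with $\log(m_{p+1}/m_p)\le C_0H^{p+1}$ for all $p\in\mathbb{N}_0$. $\boldsymbol{M}_{+1}=(M_{p+1})_p$. A sequence $(c_p)$ is almost increasing if $c_p\le ac_q$ for all $q\ge p$, some $a>0$; $\gamma(\boldsymbol{M})=\sup\{\mu>0:(m_p/(p+1)^\mu)_p\text{ almost increasing}\}\in[0,\infty]$. $C_{\{\boldsymbol{M}\}}(0,\infty)$: continuous $\varphi$ on $(0,\infty)$ with $\sup_p\sup_{x>0}x^p|\varphi(x)|/(h^pM_p)<\infty$ for some $h>0$. For a sequence $\boldsymbol{N}$, $\Lambda_{\{\boldsymbol{N}\}}$: complex sequences with $\sup_p|c_p|/(h^pN_p)<\infty$ for some $h>0$. $\mathcal{M}(\varphi)=(\int_0^\infty x^p\varphi(x)\,dx)_p$. *)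

theory Defs
  imports "HOL-Analysis.Analysis"
begin

definition quot_seq :: "(nat \<Rightarrow> real) \<Rightarrow> nat \<Rightarrow> real" where
  "quot_seq M p = M (Suc p) / M p"

definition weight_sequence :: "(nat \<Rightarrow> real) \<Rightarrow> bool" where
  "weight_sequence M \<longleftrightarrow> (\<forall>p. M p > 0) \<and> M 0 = 1 \<and>
     (\<forall>p\<ge>1. (M p)^2 \<le> M (p - 1) * M (p + 1)) \<and>
     filterlim (quot_seq M) at_top sequentially"

definition cond_sm :: "(nat \<Rightarrow> real) \<Rightarrow> bool" where
  "cond_sm M \<longleftrightarrow> (\<exists>C0 > 0. \<exists>H > 1. \<forall>p.
     ln (quot_seq M (Suc p) / quot_seq M p) \<le> C0 * H ^ (p + 1))"

definition shift1 :: "(nat \<Rightarrow> real) \<Rightarrow> nat \<Rightarrow> real" where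
  "shift1 M p = M (p + 1)"

definition almost_increasing :: "(nat \<Rightarrow> real) \<Rightarrow> bool" where
  "almost_increasing c \<longleftrightarrow> (\<exists>a > 0. \<forall>p q. p \<le> q \<longrightarrow> c p \<le> a * c q)"

text \<open>gamma index, valued in [0, infinity]; the supremum of the empty set is taken to be 0.\<close>
definition gamma_idx :: "(nat \<Rightarrow> real) \<Rightarrow> ereal" where
  "gamma_idx M = Sup ({0} \<union> {ereal \<mu> | \<mu>. \<mu> > 0 \<and>
      almost_increasing (\<lambda>p. quot_seq M p / (real p + 1) powr \<mu>)})"

definition C_roumieu :: "(nat \<Rightarrow> real) \<Rightarrow> (real \<Rightarrow> complex) set" where
  "C_roumieu M = {\<phi>. continuous_on {0<..} \<phi> \<and>
     (\<exists>h > 0. \<exists>C. \<forall>p. \<forall>x > 0. x ^ p * norm (\<phi> x) \<le> C * (h ^ p * M p))}"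

definition Lambda_roumieu :: "(nat \<Rightarrow> real) \<Rightarrow> (nat \<Rightarrow> complex) set" where
  "Lambda_roumieu N = {c. \<exists>h > 0. \<exists>C. \<forall>p. norm (c p) \<le> C * (h ^ p * N p)}"

definition moment_map :: "(real \<Rightarrow> complex) \<Rightarrow> nat \<Rightarrow> complex" where
  "moment_map \<phi> p = integral {0<..} (\<lambda>x. complex_of_real (x ^ p) * \<phi> x)"

end

theory Submission
  imports Defs
begin

text \<open>If \<open>x^p |\<phi> x| \<le> C h^p M_p\<close> for all \<open>p\<close>, split the \<open>p\<close>-th moment of \<open>\<phi>\<close> at \<open>h m_p\<close> and
  \<open>h m_(p+1)\<close> and use the bounds for the exponents \<open>p\<close>, \<open>p + 1\<close> and \<open>p + 2\<close> on the three
  pieces: this gives \<open>|\<integral> x^p \<phi>| \<le> C h^(p+1) M_(p+1) (2 + ln (m_(p+1) / m_p))\<close>, so (sm) implies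
  the inclusion. Conversely, \<open>x \<mapsto> inf\<^sub>q M_q / x^q\<close> lies in \<open>C_{M}\<close> and equals
  \<open>M_(p+1) / x^(p+1)\<close> on \<open>[m_p, m_(p+1)]\<close>, so its \<open>p\<close>-th moment is at least
  \<open>M_(p+1) ln (m_(p+1) / m_p)\<close>; a bound \<open>C h^p M_(p+1)\<close> on these moments is (sm).\<close>

lemma has_integral_inverse_interval:
  fixes a b :: real
  assumes "0 < a" "a \<le> b"
  shows "((\<lambda>x. 1 / x) has_integral (ln b - ln a)) {a..b}"
  using assms
  by (intro fundamental_theorem_of_calculus)
     (auto intro!: derivative_eq_intros simp: field_simps
           simp flip: has_real_derivative_iff_has_vector_derivative)

lemma has_integral_Ioi_three_regime:
  fixes a b c1 c2 c3 :: real
  assumes ab: "0 < a" "a \<le> b"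
  shows "((\<lambda>x. (if x \<in> {0<..<a} then c1 else 0) + (if x \<in> {a..b} then c2 / x else 0)
             + (if x \<in> {b..} then c3 / x\<^sup>2 else 0))
          has_integral c1 * a + c2 * (ln b - ln a) + c3 / b) {0<..}"
proof (intro has_integral_add)
  have "((\<lambda>x. c1) has_integral c1 * a) {0<..<a}"
    using has_integral_const_real[of c1 0 a] ab by (simp add: has_integral_Icc_iff_Ioo mult.commute)
  then show "((\<lambda>x. if x \<in> {0<..<a} then c1 else 0) has_integral c1 * a) {0<..}"
    by (subst has_integral_restrict) auto
  show "((\<lambda>x. if x \<in> {a..b} then c2 / x else 0) has_integral c2 * (ln b - ln a)) {0<..}"
    using has_integral_mult_right[OF has_integral_inverse_interval[OF ab], of c2] ab
    by (subst has_integral_restrict) auto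
  show "((\<lambda>x. if x \<in> {b..} then c3 / x\<^sup>2 else 0) has_integral c3 / b) {0<..}"
    using has_integral_mult_right[OF has_integral_inverse_power_to_inf[of 2 b], of c3] ab
    by (subst has_integral_restrict) auto
qed

lemma integral_Ioi_three_regime_bound:
  fixes f :: "real \<Rightarrow> 'a::euclidean_space"
  assumes cont: "continuous_on {0<..} f" and ab: "0 < a" "a \<le> b"
    and small: "\<And>x. 0 < x \<Longrightarrow> x \<le> a \<Longrightarrow> norm (f x) \<le> c1"
    and middle: "\<And>x. a \<le> x \<Longrightarrow> x \<le> b \<Longrightarrow> norm (f x) \<le> c2 / x"
    and large: "\<And>x. b \<le> x \<Longrightarrow> norm (f x) \<le> c3 / x\<^sup>2"
  shows "f integrable_on {0<..}"
    and "norm (integral {0<..} f) \<le> c1 * a + c2 * (ln b - ln a) + c3 / b"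
proof -
  have "0 \<le> c1" using small[of a] ab norm_ge_zero order_trans by blast
  moreover have "0 \<le> c2 / a" using middle[of a] ab norm_ge_zero order_trans by blast
  moreover have "0 \<le> c3 / b\<^sup>2" using large[of b] norm_ge_zero order_trans by blast
  ultimately have c: "0 \<le> c1" "0 \<le> c2" "0 \<le> c3"
    using ab by (auto simp: zero_le_divide_iff)
  define g1 where "g1 x = (if x \<in> {0<..<a} then c1 else 0)" for x :: real
  define g2 where "g2 x = (if x \<in> {a..b} then c2 / x else 0)" for x :: real
  define g3 where "g3 x = (if x \<in> {b..} then c3 / x\<^sup>2 else 0)" for x :: real
  have g: "((\<lambda>x. g1 x + g2 x + g3 x) has_integral c1 * a + c2 * (ln b - ln a) + c3 / b) {0<..}"
    unfolding g1_def g2_def g3_def by (rule has_integral_Ioi_three_regime[OF ab])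
  have majorant: "norm (f x) \<le> g1 x + g2 x + g3 x" if "x \<in> {0<..}" for x
  proof -
    have nonneg: "0 \<le> g1 x" "0 \<le> g2 x" "0 \<le> g3 x"
      using c ab by (auto simp: g1_def g2_def g3_def)
    consider "x < a" | "a \<le> x" "x \<le> b" | "b \<le> x" by linarith
    then show ?thesis
    proof cases
      case 1
      then show ?thesis using that small[of x] nonneg by (simp add: g1_def)
    next
      case 2
      then show ?thesis using middle[of x] nonneg by (simp add: g2_def)
    next
      case 3
      then show ?thesis using large[of x] nonneg by (simp add: g3_def)
    qed
  qed
  have meas: "f \<in> borel_measurable (lebesgue_on {0<..})"
    by (intro continuous_imp_measurable_on_sets_lebesgue cont) auto
  show "f integrable_on {0<..}"
    using g majorant by (intro measurable_bounded_by_integrable_imp_integrable[OF meas]) auto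
  show "norm (integral {0<..} f) \<le> c1 * a + c2 * (ln b - ln a) + c3 / b"
    using g majorant by (intro integral_norm_bound_integral'[OF _ meas]) auto
qed

lemma weight_sequence_pos: "weight_sequence M \<Longrightarrow> 0 < M p"
  by (simp add: weight_sequence_def)

lemma quot_seq_pos: "weight_sequence M \<Longrightarrow> 0 < quot_seq M p"
  by (simp add: quot_seq_def weight_sequence_pos)

lemma weight_sequence_Suc: "weight_sequence M \<Longrightarrow> M (Suc p) = quot_seq M p * M p"
  using weight_sequence_pos[of M p] by (simp add: quot_seq_def)

lemma incseq_quot_seq:
  assumes "weight_sequence M"
  shows "incseq (quot_seq M)"
proof (rule incseq_SucI)
  fix p
  have "(M (Suc p))\<^sup>2 \<le> M p * M (Suc (Suc p))"
    using assms unfolding weight_sequence_def by (metis Suc_eq_plus1 diff_Suc_1 le_add2)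
  then show "quot_seq M p \<le> quot_seq M (Suc p)"
    using weight_sequence_pos[OF assms, of p] weight_sequence_pos[OF assms, of "Suc p"]
    by (simp add: quot_seq_def divide_simps power2_eq_square mult.commute)
qed

lemma quot_seq_unbounded:
  assumes "weight_sequence M"
  shows "\<exists>N. x \<le> quot_seq M N"
proof -
  have "filterlim (quot_seq M) at_top sequentially"
    using assms by (simp add: weight_sequence_def)
  then show ?thesis
    unfolding filterlim_at_top eventually_sequentially by blast
qed

lemma weight_div_power_Suc:
  "weight_sequence M \<Longrightarrow> M (Suc q) / x ^ Suc q = quot_seq M q / x * (M q / x ^ q)"
  by (simp add: weight_sequence_Suc)

lemma weight_div_power_increasing:
  assumes ws: "weight_sequence M" and x: "0 < x" "x \<le> quot_seq M k" and "k \<le> q"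
  shows "M k / x ^ k \<le> M q / x ^ q"
  using \<open>k \<le> q\<close>
proof (induction rule: dec_induct)
  case (step n)
  have "1 \<le> quot_seq M n / x"
    using x incseqD[OF incseq_quot_seq[OF ws] step(1)] by simp
  then have "M n / x ^ n \<le> M (Suc n) / x ^ Suc n"
    unfolding weight_div_power_Suc[OF ws]
    using x weight_sequence_pos[OF ws, of n] by (subst mult_le_cancel_right1) (auto simp: divide_less_0_iff)
  then show ?case using step(3) by linarith
qed simp

lemma weight_div_power_decreasing:
  assumes ws: "weight_sequence M" and x: "0 < x" and below: "\<forall>j<k. quot_seq M j \<le> x" and "q \<le> k"
  shows "M k / x ^ k \<le> M q / x ^ q"
  using \<open>q \<le> k\<close> below
proof (induction rule: dec_induct)
  case (step n)
  have "quot_seq M n / x \<le> 1"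
    using x step(4) step(2) by simp
  then have "M (Suc n) / x ^ Suc n \<le> M n / x ^ n"
    unfolding weight_div_power_Suc[OF ws]
    using x weight_sequence_pos[OF ws, of n] quot_seq_pos[OF ws, of n]
    by (intro mult_left_le_one_le) auto
  then show ?case using step by auto
qed simp

lemma continuous_on_Min_image:
  fixes f :: "'i \<Rightarrow> 'a::topological_space \<Rightarrow> 'b::linorder_topology"
  assumes "finite I" "I \<noteq> {}" "\<And>i. i \<in> I \<Longrightarrow> continuous_on S (f i)"
  shows "continuous_on S (\<lambda>x. Min ((\<lambda>i. f i x) ` I))"
  using assms
proof (induction I rule: finite_ne_induct)
  case (insert i I)
  have "continuous_on S (\<lambda>x. min (f i x) (Min ((\<lambda>i. f i x) ` I)))"
    by (intro continuous_on_min) (use insert in auto)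
  moreover have "Min ((\<lambda>j. f j x) ` insert i I) = min (f i x) (Min ((\<lambda>j. f j x) ` I))" for x
    using insert.hyps by (simp add: Min_insert)
  ultimately show ?case
    by simp
qed simp

text \<open>\<open>inf_weight M x = exp (- \<omega>\<^sub>M x)\<close>, where \<open>\<omega>\<^sub>M\<close> is the associated function of \<open>M\<close>.\<close>
definition inf_weight :: "(nat \<Rightarrow> real) \<Rightarrow> real \<Rightarrow> real" where
  "inf_weight M x = (INF q. M q / x ^ q)"

lemma bdd_below_weight_div_power:
  assumes "weight_sequence M" "0 < x"
  shows "bdd_below (range (\<lambda>q. M q / x ^ q))"
  using assms weight_sequence_pos[OF assms(1)] by (intro bdd_belowI[of _ 0]) (auto intro: less_imp_le)

lemma inf_weight_nonneg:
  assumes "weight_sequence M" "0 < x"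
  shows "0 \<le> inf_weight M x"
  unfolding inf_weight_def
  using assms weight_sequence_pos[OF assms(1)] by (intro cINF_greatest) (auto intro: less_imp_le)

lemma inf_weight_le:
  assumes "weight_sequence M" "0 < x"
  shows "inf_weight M x \<le> M p / x ^ p"
  unfolding inf_weight_def using bdd_below_weight_div_power[OF assms] by (rule cINF_lower) simp

lemma power_mult_inf_weight_le:
  assumes "weight_sequence M" "0 < x"
  shows "x ^ p * inf_weight M x \<le> M p"
  using inf_weight_le[OF assms, of p] assms(2) by (simp add: field_simps mult.commute)

lemma inf_weight_eq_Min:
  assumes ws: "weight_sequence M" and x: "0 < x" "x \<le> quot_seq M N"
  shows "inf_weight M x = Min ((\<lambda>q. M q / x ^ q) ` {..N})"
proof (rule antisym)
  have "Min ((\<lambda>q. M q / x ^ q) ` {..N}) \<in> (\<lambda>q. M q / x ^ q) ` {..N}"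
    by (intro Min_in) auto
  then obtain q where "Min ((\<lambda>q. M q / x ^ q) ` {..N}) = M q / x ^ q"
    by (rule imageE)
  then show "inf_weight M x \<le> Min ((\<lambda>q. M q / x ^ q) ` {..N})"
    using inf_weight_le[OF ws x(1), of q] by simp
  show "Min ((\<lambda>q. M q / x ^ q) ` {..N}) \<le> inf_weight M x"
    unfolding inf_weight_def
  proof (rule cINF_greatest)
    fix q
    have "Min ((\<lambda>q. M q / x ^ q) ` {..N}) \<le> M (min q N) / x ^ min q N"
      by (rule Min_le) auto
    also have "\<dots> \<le> M q / x ^ q"
      by (cases "q \<le> N") (auto intro: weight_div_power_increasing[OF ws x])
    finally show "Min ((\<lambda>q. M q / x ^ q) ` {..N}) \<le> M q / x ^ q" .
  qed simp
qed

lemma continuous_on_inf_weight: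
  assumes ws: "weight_sequence M"
  shows "continuous_on {0<..} (inf_weight M)"
proof -
  have cover: "{0<..} = (\<Union>N. {0<..<quot_seq M N})"
  proof (intro equalityI subsetI)
    fix x :: real
    assume "x \<in> {0<..}"
    moreover obtain N where "x + 1 \<le> quot_seq M N"
      using quot_seq_unbounded[OF ws] by blast
    then have "x < quot_seq M N" by linarith
    ultimately show "x \<in> (\<Union>N. {0<..<quot_seq M N})" by auto
  qed auto
  have "continuous_on {0<..<quot_seq M N} (inf_weight M)" for N
  proof -
    have "continuous_on {0<..<quot_seq M N} (\<lambda>x. Min ((\<lambda>q. M q / x ^ q) ` {..N}))"
      by (intro continuous_on_Min_image continuous_intros) auto
    then show ?thesis
      by (rule continuous_on_cong[THEN iffD1, rotated 2])
         (auto intro!: inf_weight_eq_Min[OF ws, symmetric])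
  qed
  then show ?thesis
    by (subst cover) (rule continuous_on_open_Union; auto)
qed

lemma inf_weight_on_quot_interval:
  assumes ws: "weight_sequence M" and x: "quot_seq M p \<le> x" "x \<le> quot_seq M (Suc p)"
  shows "M (Suc p) / x ^ Suc p \<le> inf_weight M x"
  unfolding inf_weight_def
proof (rule cINF_greatest)
  fix q
  have x0: "0 < x" using quot_seq_pos[OF ws, of p] x by linarith
  show "M (Suc p) / x ^ Suc p \<le> M q / x ^ q"
  proof (cases "q \<le> Suc p")
    case True
    have "\<forall>j<Suc p. quot_seq M j \<le> x"
      using incseqD[OF incseq_quot_seq[OF ws]] x(1) by (meson less_Suc_eq_le order_trans)
    then show ?thesis by (rule weight_div_power_decreasing[OF ws x0 _ True])
  next
    case False
    then show ?thesis by (intro weight_div_power_increasing[OF ws x0 x(2)]) simp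
  qed
qed simp

lemma mult_power_le_divide_power:
  fixes x y B :: real
  assumes "0 < x" "x ^ (p + k) * y \<le> B"
  shows "x ^ p * y \<le> B / x ^ k"
  using assms by (simp add: power_add field_simps)

lemma norm_moment_map_le:
  assumes ws: "weight_sequence M" and cont: "continuous_on {0<..} \<phi>" and h: "0 < h"
    and bound: "\<And>q x. 0 < x \<Longrightarrow> x ^ q * norm (\<phi> x) \<le> C * (h ^ q * M q)"
  shows "norm (moment_map \<phi> p)
           \<le> C * h ^ Suc p * M (Suc p) * (2 + ln (quot_seq M (Suc p) / quot_seq M p))"
proof -
  define a where "a = h * quot_seq M p"
  define b where "b = h * quot_seq M (Suc p)"
  have ab: "0 < a" "a \<le> b"
    using h quot_seq_pos[OF ws, of p] incseqD[OF incseq_quot_seq[OF ws], of p "Suc p"]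
    by (auto simp: a_def b_def)
  have norm_integrand: "norm (complex_of_real (x ^ p) * \<phi> x) = x ^ p * norm (\<phi> x)" if "0 < x" for x
    using that by (simp add: norm_mult norm_power)
  have "norm (moment_map \<phi> p) \<le> C * (h ^ p * M p) * a
      + C * (h ^ (p + 1) * M (p + 1)) * (ln b - ln a) + C * (h ^ (p + 2) * M (p + 2)) / b"
    unfolding moment_map_def
  proof (rule integral_Ioi_three_regime_bound(2)[OF _ ab])
    show "continuous_on {0<..} (\<lambda>x. complex_of_real (x ^ p) * \<phi> x)"
      by (intro continuous_intros cont)
  next
    fix x :: real
    assume "0 < x"
    then show "norm (complex_of_real (x ^ p) * \<phi> x) \<le> C * (h ^ p * M p)"
      using bound norm_integrand by simp
  next
    fix x :: real
    assume "a \<le> x"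
    then have "0 < x" using ab by linarith
    then show "norm (complex_of_real (x ^ p) * \<phi> x) \<le> C * (h ^ (p + 1) * M (p + 1)) / x"
      using mult_power_le_divide_power[OF _ bound, of x p 1] norm_integrand by simp
  next
    fix x :: real
    assume "b \<le> x"
    then have "0 < x" using ab by linarith
    then show "norm (complex_of_real (x ^ p) * \<phi> x) \<le> C * (h ^ (p + 2) * M (p + 2)) / x\<^sup>2"
      using mult_power_le_divide_power[OF _ bound, of x p 2] norm_integrand by simp
  qed
  also have "\<dots> = C * h ^ Suc p * M (Suc p) * (2 + ln (quot_seq M (Suc p) / quot_seq M p))"
  proof -
    have "M (p + 2) = quot_seq M (Suc p) * quot_seq M p * M p"
      "M (p + 1) = quot_seq M p * M p"
      using weight_sequence_Suc[OF ws] by (simp_all add: numeral_2_eq_2)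
    moreover have "ln b - ln a = ln (quot_seq M (Suc p) / quot_seq M p)"
      using h quot_seq_pos[OF ws, of p] quot_seq_pos[OF ws, of "Suc p"]
      by (simp add: a_def b_def ln_mult ln_div)
    ultimately show ?thesis
      using h quot_seq_pos[OF ws, of "Suc p"]
      by (simp add: a_def b_def weight_sequence_Suc[OF ws] field_simps power2_eq_square)
  qed
  finally show ?thesis .
qed

lemma moment_map_subset_Lambda_roumieu_if_sm:
  assumes ws: "weight_sequence M" and sm: "cond_sm M"
  shows "moment_map ` C_roumieu M \<subseteq> Lambda_roumieu (shift1 M)"
proof
  fix c
  assume "c \<in> moment_map ` C_roumieu M"
  then obtain \<phi> h C where c: "c = moment_map \<phi>" and cont: "continuous_on {0<..} \<phi>" and h: "0 < h"
    and bound: "\<And>q x. 0 < x \<Longrightarrow> x ^ q * norm (\<phi> x) \<le> C * (h ^ q * M q)"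
    unfolding C_roumieu_def by blast
  from sm obtain C0 H where H: "1 < H"
    and sm_bound: "\<And>p. ln (quot_seq M (Suc p) / quot_seq M p) \<le> C0 * H ^ (p + 1)"
    unfolding cond_sm_def by auto
  have "norm (\<phi> 1) \<le> C"
    using bound[of 1 0] ws by (simp add: weight_sequence_def)
  then have "0 \<le> C"
    using norm_ge_zero order_trans by blast
  have "norm (c p) \<le> (C * h * (2 + C0) * H) * ((h * H) ^ p * shift1 M p)" for p
  proof -
    have K: "0 \<le> C * h ^ Suc p * M (Suc p)"
      using \<open>0 \<le> C\<close> h weight_sequence_pos[OF ws] by (simp add: less_imp_le)
    have "2 + C0 * H ^ (p + 1) \<le> (2 + C0) * H ^ (p + 1)"
      using one_le_power[of H "p + 1"] H by (simp add: algebra_simps)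
    then have "2 + ln (quot_seq M (Suc p) / quot_seq M p) \<le> (2 + C0) * H ^ (p + 1)"
      using sm_bound[of p] by linarith
    then have "norm (c p) \<le> C * h ^ Suc p * M (Suc p) * ((2 + C0) * H ^ (p + 1))"
      using norm_moment_map_le[OF ws cont h bound, of p] K c
      by (meson mult_left_mono order_trans)
    then show ?thesis
      by (simp add: shift1_def power_mult_distrib algebra_simps)
  qed
  moreover have "0 < h * H" using h H by simp
  ultimately show "c \<in> Lambda_roumieu (shift1 M)"
    unfolding Lambda_roumieu_def by blast
qed

lemma inf_weight_in_C_roumieu:
  assumes ws: "weight_sequence M"
  shows "(\<lambda>x. complex_of_real (inf_weight M x)) \<in> C_roumieu M"
proof -
  have "x ^ p * norm (complex_of_real (inf_weight M x)) \<le> 1 * (1 ^ p * M p)" if "0 < x" for p x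
    using power_mult_inf_weight_le[OF ws that] inf_weight_nonneg[OF ws that] by simp
  moreover have "continuous_on {0<..} (\<lambda>x. complex_of_real (inf_weight M x))"
    by (intro continuous_on_of_real continuous_on_inf_weight ws)
  ultimately show ?thesis
    unfolding C_roumieu_def by (intro CollectI conjI exI[of _ 1]) auto
qed

lemma moment_map_inf_weight_ge:
  assumes ws: "weight_sequence M"
  shows "M (Suc p) * ln (quot_seq M (Suc p) / quot_seq M p)
           \<le> norm (moment_map (\<lambda>x. complex_of_real (inf_weight M x)) p)"
proof -
  define \<psi> where "\<psi> x = x ^ p * inf_weight M x" for x
  define a where "a = quot_seq M p"
  define b where "b = quot_seq M (Suc p)"
  have ab: "0 < a" "a \<le> b"
    using quot_seq_pos[OF ws, of p] incseqD[OF incseq_quot_seq[OF ws], of p "Suc p"]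
    by (auto simp: a_def b_def)
  have cont: "continuous_on {0<..} \<psi>"
    unfolding \<psi>_def by (intro continuous_intros continuous_on_inf_weight ws)
  have nonneg: "0 \<le> \<psi> x" if "0 < x" for x
    using inf_weight_nonneg[OF ws that] that by (simp add: \<psi>_def)
  have bound: "0 < x \<Longrightarrow> x ^ q * \<psi> x \<le> M (p + q)" for q x
    using power_mult_inf_weight_le[OF ws, of x "p + q"] by (simp add: \<psi>_def power_add mult.left_commute)
  have "\<psi> integrable_on {0<..}"
  proof (rule integral_Ioi_three_regime_bound(1)[OF cont ab])
    show "norm (\<psi> x) \<le> M p" if "0 < x" for x
      using bound[of x 0] nonneg[OF that] that by simp
    show "norm (\<psi> x) \<le> M (p + 1) / x" if "a \<le> x" for x
    proof -
      have "0 < x" using that ab by linarith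
      then show ?thesis
        using bound[of x 1] nonneg by (simp add: pos_le_divide_eq mult.commute)
    qed
    show "norm (\<psi> x) \<le> M (p + 2) / x\<^sup>2" if "b \<le> x" for x
    proof -
      have "0 < x" using that ab by linarith
      then show ?thesis
        using bound[of x 2] nonneg by (simp add: pos_le_divide_eq mult.commute)
    qed
  qed
  then have "((\<lambda>x. complex_of_real (\<psi> x)) has_integral complex_of_real (integral {0<..} \<psi>)) {0<..}"
    by (intro has_integral_of_real integrable_integral)
  then have moment: "moment_map (\<lambda>x. complex_of_real (inf_weight M x)) p
                       = complex_of_real (integral {0<..} \<psi>)"
    unfolding moment_map_def using integral_unique by (simp add: \<psi>_def)
  have "((\<lambda>x. M (Suc p) * (1 / x)) has_integral M (Suc p) * (ln b - ln a)) {a..b}"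
    by (intro has_integral_mult_right has_integral_inverse_interval ab)
  moreover have "M (Suc p) * (1 / x) \<le> \<psi> x" if "x \<in> {a..b}" for x
  proof -
    have "0 < x" using that ab by simp
    moreover have "M (Suc p) / x ^ Suc p \<le> inf_weight M x"
      using inf_weight_on_quot_interval[OF ws] that by (simp add: a_def b_def)
    ultimately show ?thesis
      by (simp add: \<psi>_def field_simps)
  qed
  moreover have "\<psi> integrable_on {a..b}"
    using ab by (intro integrable_continuous_interval continuous_on_subset[OF cont]) auto
  ultimately have "M (Suc p) * (ln b - ln a) \<le> integral {a..b} \<psi>"
    by (intro has_integral_le[OF _ integrable_integral]) auto
  also have "\<dots> \<le> integral {0<..} \<psi>"
    using ab \<open>\<psi> integrable_on {a..b}\<close> \<open>\<psi> integrable_on {0<..}\<close> nonneg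
    by (intro integral_subset_le) auto
  also have "\<dots> = norm (moment_map (\<lambda>x. complex_of_real (inf_weight M x)) p)"
    using integral_nonneg[OF \<open>\<psi> integrable_on {0<..}\<close>] nonneg by (simp add: moment)
  finally show ?thesis
    using ab by (simp add: a_def b_def ln_div)
qed

lemma sm_if_moment_map_subset_Lambda_roumieu:
  assumes ws: "weight_sequence M"
    and incl: "moment_map ` C_roumieu M \<subseteq> Lambda_roumieu (shift1 M)"
  shows "cond_sm M"
proof -
  have "moment_map (\<lambda>x. complex_of_real (inf_weight M x)) \<in> Lambda_roumieu (shift1 M)"
    using incl inf_weight_in_C_roumieu[OF ws] by blast
  then obtain h C where h: "0 < h"
    and bound: "\<And>p. norm (moment_map (\<lambda>x. complex_of_real (inf_weight M x)) p) \<le> C * (h ^ p * M (Suc p))"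
    unfolding Lambda_roumieu_def shift1_def by auto
  have "ln (quot_seq M (Suc p) / quot_seq M p) \<le> (\<bar>C\<bar> + 1) * (h + 2) ^ (p + 1)" for p
  proof -
    have "M (Suc p) * ln (quot_seq M (Suc p) / quot_seq M p) \<le> M (Suc p) * (C * h ^ p)"
      using moment_map_inf_weight_ge[OF ws, of p] bound[of p] by (simp add: algebra_simps)
    then have "ln (quot_seq M (Suc p) / quot_seq M p) \<le> C * h ^ p"
      using weight_sequence_pos[OF ws, of "Suc p"] by simp
    also have "\<dots> \<le> (\<bar>C\<bar> + 1) * (h + 2) ^ (p + 1)"
    proof (rule mult_mono)
      have "h ^ p \<le> (h + 2) ^ p" using h by (intro power_mono) auto
      also have "\<dots> \<le> (h + 2) ^ (p + 1)" using h by (intro power_increasing) auto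
      finally show "h ^ p \<le> (h + 2) ^ (p + 1)" .
    qed (use h in auto)
    finally show ?thesis .
  qed
  moreover have "0 < \<bar>C\<bar> + 1" "1 < h + 2" using h by auto
  ultimately show ?thesis
    unfolding cond_sm_def by blast
qed

theorem proposition3p4:
  fixes M :: "nat \<Rightarrow> real"
  assumes "weight_sequence M"
    and "gamma_idx M > 0"
  shows "moment_map ` C_roumieu M \<subseteq> Lambda_roumieu (shift1 M) \<longleftrightarrow> cond_sm M"
  using moment_map_subset_Lambda_roumieu_if_sm[OF assms(1)]
    sm_if_moment_map_subset_Lambda_roumieu[OF assms(1)] by blast

end
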